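(* Let $A$ and $B$ be non-clopen subsets of a finite topological space $X$ which are separated (i.e. $\overline{A}\cap B=A\cap\overline{B}=\emptyset$). Let $\tilde A=\{a\in Cent_X(A)\mid \Psi(a,\partial_X(B))<rad_X(A)\}$ and $\tilde B=\{b\in Cent_X(B)\mid \Psi(b,\partial_X(A))<rad_X(B)\}$. Then $rad_X(A\cup B)\le\max\{rad_X(A),rad_X(B)\}$. Moreover: (i) if $rad_X(A)>rad_X(B)$ and $Cent_X(A)\setminus\tilde A\ne\emptyset$, then $Cent_X(A\cup B)=Cent_X(A)\setminus\tilde A$ and $rad_X(A\cup B)=rad_X(A)$; (ii) if $rad_X(A)=rad_X(B)$ and $(Cent_X(A)\setminus\tilde A)\cup(Cent_X(B)\setminus\tilde B)\ne\emptyset$, then $Cent_X(A\cup B)=(Cent_X(A)\setminus\tilde A)\cup(Cent_X(B)\setminus\tilde B)$ and $rad_X(A\cup B)=rad_X(A)=rad_X(B)$.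
   Context: For a finite topological space $X$ and $x\in X$, $U_x$ denotes the minimal open set containing $x$. A nested sequence of open sets around $x$ is a finite sequence $U_0\subsetneq U_1\subsetneq\cdots\subsetneq U_m=X$ of open sets with $U_0=U_x$ such that for each $j$ there is no open set $V$ with $U_j\subsetneq V\subsetneq U_{j+1}$. The furtherness function $\Psi:X\times X\to\{0,1,\dots,|X|-1\}$ is defined by: $\Psi(x,y)$ is the smallest integer $k\ge 0$ such that there exists a nested sequence $(U_j)_{j\ge0}$ of open sets around $x$ with $y\in U_k$. For $a\in X$ and $B\subseteq X$, $\Psi(a,B)=\min_{b\in B}\Psi(a,b)$, and for $A,B\subseteq X$, $\Psi(A,B)=\min_{a\in A}\Psi(a,B)$, with the value $\infty$ (larger than every integer) if $A$ or $B$ is empty. $\partial_X(A)$ denotes the boundary of $A$ in $X$. The center of $A$ is $Cent_X(A)=\{a\in A\mid \Psi(a,\partial_X(A))\ge\Psi(b,\partial_X(A))\ \forall b\in A\}$, and the radius is $rad_X(A)=\Psi(Cent_X(A),\partial_X(A))$ (equal to $\Psi(a,\partial_X(A))$ for any $a\in Cent_X(A)$). *)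

theory Defs
  imports "HOL-Analysis.Analysis" "HOL-Library.Extended_Nat"
begin

definition minopen :: "'a topology \<Rightarrow> 'a \<Rightarrow> 'a set" where
  "minopen X x = \<Inter>{U. openin X U \<and> x \<in> U}"

definition nested_seq :: "'a topology \<Rightarrow> 'a \<Rightarrow> 'a set list \<Rightarrow> bool" where
  "nested_seq X x Us \<longleftrightarrow> Us \<noteq> [] \<and> hd Us = minopen X x \<and> last Us = topspace X \<and>
     (\<forall>i < length Us. openin X (Us ! i)) \<and>
     (\<forall>j. Suc j < length Us \<longrightarrow> Us ! j \<subset> Us ! Suc j \<and>
        \<not> (\<exists>V. openin X V \<and> Us ! j \<subset> V \<and> V \<subset> Us ! Suc j))"

definition Psi :: "'a topology \<Rightarrow> 'a \<Rightarrow> 'a \<Rightarrow> nat" where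
  "Psi X x y = (LEAST k. \<exists>Us. nested_seq X x Us \<and> k < length Us \<and> y \<in> Us ! k)"

text \<open>Furtherness between sets; infinity if either set is empty.\<close>
definition PsiS :: "'a topology \<Rightarrow> 'a set \<Rightarrow> 'a set \<Rightarrow> enat" where
  "PsiS X A B = (INF a\<in>A. INF b\<in>B. enat (Psi X a b))"

definition Cent :: "'a topology \<Rightarrow> 'a set \<Rightarrow> 'a set" where
  "Cent X A = {a \<in> A. \<forall>b \<in> A. PsiS X {a} (X frontier_of A) \<ge> PsiS X {b} (X frontier_of A)}"

definition rad :: "'a topology \<Rightarrow> 'a set \<Rightarrow> enat" where
  "rad X A = PsiS X (Cent X A) (X frontier_of A)"

end

theory Submission
  imports Defs
begin

text \<open>Write depth X A x for the furtherness of x from the frontier of A. For separated sets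
  the frontier of A \<union> B is the union of the two frontiers, so depth X (A \<union> B) is the
  minimum of depth X A and depth X B. On a finite set the centre is where the depth is maximal
  and the radius is that maximum. Hence every point of A \<union> B has depth at most
  max (rad A) (rad B), and as soon as some point attains this bound, the centre of A \<union> B
  consists of exactly the points attaining it: the centres of the set of larger radius whose
  depth with respect to the other set is not smaller than that radius.\<close>

definition depth :: "'a topology \<Rightarrow> 'a set \<Rightarrow> 'a \<Rightarrow> enat" where
  "depth X A x = PsiS X {x} (X frontier_of A)"

lemma Cent_eq_depth: "Cent X A = {a\<in>A. \<forall>b\<in>A. depth X A b \<le> depth X A a}"
  by (simp add: Cent_def depth_def)

lemma rad_eq_INF_depth: "rad X A = (INF a\<in>Cent X A. depth X A a)"
  by (simp add: rad_def depth_def PsiS_def)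

lemma frontier_of_subset_frontier_of_Un_separatedin:
  assumes "separatedin X S T"
  shows "X frontier_of S \<subseteq> X frontier_of (S \<union> T)"
proof
  fix x assume x: "x \<in> X frontier_of S"
  then have cl: "x \<in> X closure_of S" and not_int: "x \<notin> X interior_of S"
    by (simp_all add: frontier_of_def)
  have sep: "S \<inter> X closure_of T = {}" "T \<inter> X closure_of S = {}" "T \<subseteq> topspace X"
    using assms by (simp_all add: separatedin_def)
  have "x \<notin> X interior_of (S \<union> T)"
  proof
    assume int: "x \<in> X interior_of (S \<union> T)"
    then have "x \<in> S \<union> T"
      using interior_of_subset[of X "S \<union> T"] by blast
    then have "x \<notin> X closure_of T"
      using cl sep by blast
    moreover have "X interior_of (S \<union> T) - X closure_of T \<subseteq> X interior_of S"
      using interior_of_subset[of X "S \<union> T"] closure_of_subset[OF sep(3)]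
      by (intro interior_of_maximal) auto
    ultimately show False
      using int not_int by blast
  qed
  moreover have "x \<in> X closure_of (S \<union> T)"
    using cl by (simp add: closure_of_Un)
  ultimately show "x \<in> X frontier_of (S \<union> T)"
    by (simp add: frontier_of_def)
qed

lemma frontier_of_Un_separatedin:
  assumes "separatedin X S T"
  shows "X frontier_of (S \<union> T) = X frontier_of S \<union> X frontier_of T"
proof -
  have "X frontier_of T \<subseteq> X frontier_of (T \<union> S)"
    using assms by (intro frontier_of_subset_frontier_of_Un_separatedin) (simp add: separatedin_sym)
  then show ?thesis
    using frontier_of_Un_subset[of X S T] frontier_of_subset_frontier_of_Un_separatedin[OF assms]
    by (auto simp: Un_commute)
qed

lemma depth_Un_separatedin:
  assumes "separatedin X A B"
  shows "depth X (A \<union> B) x = min (depth X A x) (depth X B x)"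
  unfolding depth_def PsiS_def frontier_of_Un_separatedin[OF assms]
  by (simp add: INF_union inf_min)

lemma Cent_rad_attained_bound:
  assumes "\<forall>x\<in>A. depth X A x \<le> r" and "x\<^sub>0 \<in> A" and "depth X A x\<^sub>0 = r"
  shows "Cent X A = {x\<in>A. depth X A x = r}" and "rad X A = r"
proof -
  show Cent: "Cent X A = {x\<in>A. depth X A x = r}"
    unfolding Cent_eq_depth using assms by (auto intro: order.antisym)
  have "rad X A = (INF x\<in>Cent X A. r)"
    unfolding rad_eq_INF_depth Cent by (rule INF_cong) auto
  also have "\<dots> = r"
    using assms unfolding Cent by (intro INF_const) auto
  finally show "rad X A = r" .
qed

lemma rad_eq_Max_depth:
  assumes "finite A" and "A \<noteq> {}"
  shows "rad X A = Max (depth X A ` A)"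
proof -
  have "Max (depth X A ` A) \<in> depth X A ` A"
    using assms by (intro Max_in) auto
  then obtain x\<^sub>0 where x\<^sub>0: "x\<^sub>0 \<in> A" "depth X A x\<^sub>0 = Max (depth X A ` A)"
    by (rule imageE) simp
  have "\<forall>x\<in>A. depth X A x \<le> Max (depth X A ` A)"
    using assms(1) by simp
  then show ?thesis
    by (rule Cent_rad_attained_bound(2)[OF _ x\<^sub>0])
qed

lemma depth_le_rad:
  assumes "finite A" and "x \<in> A"
  shows "depth X A x \<le> rad X A"
proof -
  have "A \<noteq> {}"
    using assms(2) by blast
  then show ?thesis
    using assms by (simp add: rad_eq_Max_depth)
qed

lemma rad_attained:
  assumes "finite A" and "A \<noteq> {}"
  obtains x where "x \<in> A" and "depth X A x = rad X A"
proof -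
  have "Max (depth X A ` A) \<in> depth X A ` A"
    using assms by (intro Max_in) auto
  then obtain x where "x \<in> A" "depth X A x = Max (depth X A ` A)"
    by (rule imageE) simp
  then show ?thesis
    by (intro that) (simp_all add: rad_eq_Max_depth[OF assms])
qed

lemma Cent_eq_rad_level_set:
  assumes "finite A"
  shows "Cent X A = {x\<in>A. depth X A x = rad X A}"
proof (cases "A = {}")
  case True
  then show ?thesis by (simp add: Cent_def)
next
  case False
  with assms obtain x\<^sub>0 where "x\<^sub>0 \<in> A" "depth X A x\<^sub>0 = rad X A"
    by (rule rad_attained)
  then show ?thesis
    using depth_le_rad[OF assms] by (intro Cent_rad_attained_bound(1)) auto
qed

lemma depth_Un_le_max_rad:
  assumes "finite A" and "finite B" and "separatedin X A B" and "x \<in> A \<union> B"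
  shows "depth X (A \<union> B) x \<le> max (rad X A) (rad X B)"
proof -
  have "depth X A x \<le> rad X A \<or> depth X B x \<le> rad X B"
    using assms(4) depth_le_rad[OF assms(1)] depth_le_rad[OF assms(2)] by blast
  then show ?thesis
    by (auto simp: depth_Un_separatedin[OF assms(3)] min_le_iff_disj le_max_iff_disj)
qed

lemma rad_Un_separatedin_le:
  assumes "finite A" and "finite B" and "separatedin X A B" and "A \<union> B \<noteq> {}"
  shows "rad X (A \<union> B) \<le> max (rad X A) (rad X B)"
proof -
  have "finite (A \<union> B)"
    using assms(1,2) by simp
  then obtain x where x: "x \<in> A \<union> B" "depth X (A \<union> B) x = rad X (A \<union> B)"
    using assms(4) by (rule rad_attained)
  then show ?thesis
    using depth_Un_le_max_rad[OF assms(1-3) x(1)] by simp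
qed

lemma Cent_rad_Un_separatedin:
  assumes "finite A" and "finite B" and "separatedin X A B"
    and "{x\<in>A \<union> B. depth X (A \<union> B) x = max (rad X A) (rad X B)} \<noteq> {}"
  shows "Cent X (A \<union> B) = {x\<in>A \<union> B. depth X (A \<union> B) x = max (rad X A) (rad X B)}"
    and "rad X (A \<union> B) = max (rad X A) (rad X B)"
proof -
  obtain x\<^sub>0 where x\<^sub>0: "x\<^sub>0 \<in> A \<union> B" "depth X (A \<union> B) x\<^sub>0 = max (rad X A) (rad X B)"
    using assms(4) by blast
  have "\<forall>x\<in>A \<union> B. depth X (A \<union> B) x \<le> max (rad X A) (rad X B)"
    using depth_Un_le_max_rad[OF assms(1-3)] by blast
  from Cent_rad_attained_bound[OF this x\<^sub>0] show
    "Cent X (A \<union> B) = {x\<in>A \<union> B. depth X (A \<union> B) x = max (rad X A) (rad X B)}"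
    and "rad X (A \<union> B) = max (rad X A) (rad X B)" .
qed

lemma min_depth_max_rad_level_set:
  assumes "finite A"
  shows "{x\<in>A. min (depth X A x) (depth X B x) = max (rad X A) (rad X B)}
    = (if rad X B \<le> rad X A then Cent X A - {a \<in> Cent X A. depth X B a < rad X A} else {})"
proof (cases "rad X B \<le> rad X A")
  case True
  then have "max (rad X A) (rad X B) = rad X A"
    by (rule max_absorb1)
  with True show ?thesis
    using depth_le_rad[OF assms]
    by (auto simp: Cent_eq_rad_level_set[OF assms] min_def not_less)
next
  case False
  have "min (depth X A x) (depth X B x) < max (rad X A) (rad X B)" if "x \<in> A" for x
    using False order.strict_trans1[OF depth_le_rad[OF assms that]]
    by (simp add: min.strict_coboundedI1 less_max_iff_disj)
  with False show ?thesis
    by force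
qed

lemma max_rad_level_set_Un_separatedin:
  assumes "finite A" and "finite B" and "separatedin X A B"
  shows "{x\<in>A \<union> B. depth X (A \<union> B) x = max (rad X A) (rad X B)}
    = (if rad X B \<le> rad X A then Cent X A - {a \<in> Cent X A. depth X B a < rad X A} else {})
      \<union> (if rad X A \<le> rad X B then Cent X B - {b \<in> Cent X B. depth X A b < rad X B} else {})"
  using min_depth_max_rad_level_set[OF assms(1), of X B]
    min_depth_max_rad_level_set[OF assms(2), of X A]
  by (auto simp: depth_Un_separatedin[OF assms(3)] min.commute max.commute)

theorem theorem2p25:
  fixes X :: "'a topology" and A B :: "'a set"
  assumes "finite (topspace X)"
    and "A \<subseteq> topspace X" and "B \<subseteq> topspace X"
    and "\<not> (openin X A \<and> closedin X A)"
    and "\<not> (openin X B \<and> closedin X B)"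
    and "(X closure_of A) \<inter> B = {}" and "A \<inter> (X closure_of B) = {}"
  defines "At \<equiv> {a \<in> Cent X A. PsiS X {a} (X frontier_of B) < rad X A}"
    and "Bt \<equiv> {b \<in> Cent X B. PsiS X {b} (X frontier_of A) < rad X B}"
  shows "rad X (A \<union> B) \<le> max (rad X A) (rad X B) \<and>
         (rad X A > rad X B \<and> Cent X A - At \<noteq> {} \<longrightarrow>
           Cent X (A \<union> B) = Cent X A - At \<and> rad X (A \<union> B) = rad X A) \<and>
         (rad X A = rad X B \<and> (Cent X A - At) \<union> (Cent X B - Bt) \<noteq> {} \<longrightarrow>
           Cent X (A \<union> B) = (Cent X A - At) \<union> (Cent X B - Bt) \<and>
           rad X (A \<union> B) = rad X A \<and> rad X (A \<union> B) = rad X B)"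
proof -
  have sep: "separatedin X A B"
    using assms(2,3,6,7) by (auto simp: separatedin_def)
  have fin: "finite A" "finite B"
    using rev_finite_subset[OF assms(1)] assms(2,3) by blast+
  have "A \<noteq> {}"
    using assms(4) by (metis openin_empty closedin_empty)
  have "At = {a \<in> Cent X A. depth X B a < rad X A}"
    and "Bt = {b \<in> Cent X B. depth X A b < rad X B}"
    unfolding At_def Bt_def depth_def by (rule refl)+
  note top_level = max_rad_level_set_Un_separatedin[OF fin sep, folded this]
  show ?thesis
  proof (intro conjI impI)
    show "rad X (A \<union> B) \<le> max (rad X A) (rad X B)"
      using rad_Un_separatedin_le[OF fin sep] \<open>A \<noteq> {}\<close> by blast
  next
    assume h: "rad X A > rad X B \<and> Cent X A - At \<noteq> {}"
    then have "rad X B \<le> rad X A" and "\<not> rad X A \<le> rad X B"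
      by auto
    with h top_level Cent_rad_Un_separatedin[OF fin sep]
    show "Cent X (A \<union> B) = Cent X A - At" and "rad X (A \<union> B) = rad X A"
      by (simp_all add: max_absorb1)
  next
    assume "rad X A = rad X B \<and> (Cent X A - At) \<union> (Cent X B - Bt) \<noteq> {}"
    with top_level Cent_rad_Un_separatedin[OF fin sep]
    show "Cent X (A \<union> B) = (Cent X A - At) \<union> (Cent X B - Bt)"
      and "rad X (A \<union> B) = rad X A" and "rad X (A \<union> B) = rad X B"
      by simp_all
  qed
qed

end
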